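(* Let $X\in\mathbb{R}^{n\times p}$ have unit $\ell_2$-norm columns, let $\beta\in\mathbb{R}^p$ be $k$-sparse with support $\mathcal{S}$, let $\eta\in\mathbb{R}^n$ have independent $\mathcal{N}(0,\sigma^2)$ entries, and let $y=X\beta+\eta$. Suppose $X$ satisfies the $(k,b)$-screening condition for $\beta$ with parameter $b=b(n,p)\in(0,1/\sqrt{k})$, and assume $$\frac{\beta_{\min}}{\|\beta\|_2} > 2b + \frac{4\sqrt{\sigma^2\log p}}{\|\beta\|_2}.$$ Then, whenever the event $\mathcal{G}_\eta=\{\|X^\top\eta\|_\infty\le 2\sqrt{\sigma^2\log p}\}$ occurs, the output $\hat{\mathcal{S}}$ of Algorithm 1 satisfies $\mathcal{S}\subset\hat{\mathcal{S}}$ for every integer $d\le p$ with $$d \ge \left\lceil \frac{\sqrt{k}}{\frac{\beta_{\min}}{\|\beta\|_2} - 2b - \frac{4\sqrt{\sigma^2\log p}}{\|\beta\|_2}}\right\rceil .$$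
   Context: Notation: $[[p]]=\{1,\dots,p\}$; $n,p,k$ are positive integers with $p\ge 2$ and $k<n$. $X\in\mathbb{R}^{n\times p}$ has columns $X_1,\dots,X_p$, each with $\|X_j\|_2=1$. $\beta\in\mathbb{R}^p$ is $k$-sparse: its support $\mathcal{S}=\{i\in[[p]]:\beta_i\neq 0\}$ has exactly $k$ elements; $\mathcal{S}^c=[[p]]\setminus\mathcal{S}$; $\beta_{\min}=\min_{i\in\mathcal{S}}|\beta_i|$. Algorithm 1 (marginal correlation screening): given $X$, $y$ and an integer $d\in\{1,\dots,p\}$, compute $w=X^\top y$ and output a set $\hat{\mathcal{S}}\subset[[p]]$ with $|\hat{\mathcal{S}}|=d$ consisting of indices of the $d$ largest values of $|w_i|$, i.e. $|w_i|\ge |w_j|$ for all $i\in\hat{\mathcal{S}}$, $j\notin\hat{\mathcal{S}}$ (ties broken arbitrarily). $(k,b)$-screening condition: for a fixed $k$-sparse $\beta$ with support $\mathcal{S}$, the matrix $X$ (unit-norm columns) satisfies it if there is $b=b(n,p)$ with $0<b<1/\sqrt{k}$ such that (SC-1) $\max_{i\in\mathcal{S}}\big|\sum_{j\in\mathcal{S},\,j\neq i}X_i^\top X_j\beta_j\big|\le b\,\|\beta\|_2$, and (SC-2) $\max_{i\in\mathcal{S}^c}\big|\sum_{j\in\mathcal{S}}X_i^\top X_j\beta_j\big|\le b\,\|\beta\|_2$. *)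

theory Defs
  imports Complex_Main
begin

text \<open>Vectors in R^m are functions nat => real, indexed by {1..m}.
  A matrix X in R^(n x p) is a function nat => nat => real, entry X r j
  (row r in {1..n}, column j in {1..p}); column X_j is (\<lambda>r. X r j).\<close>

definition col_inner :: "nat \<Rightarrow> (nat \<Rightarrow> nat \<Rightarrow> real) \<Rightarrow> nat \<Rightarrow> nat \<Rightarrow> real" where
  "col_inner n X i j = (\<Sum>r\<in>{1..n}. X r i * X r j)"

definition vnorm :: "nat \<Rightarrow> (nat \<Rightarrow> real) \<Rightarrow> real" where
  "vnorm m v = sqrt (\<Sum>i\<in>{1..m}. (v i)\<^sup>2)"

definition support :: "nat \<Rightarrow> (nat \<Rightarrow> real) \<Rightarrow> nat set" where
  "support p \<beta> = {i\<in>{1..p}. \<beta> i \<noteq> 0}"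

definition beta_min :: "nat \<Rightarrow> (nat \<Rightarrow> real) \<Rightarrow> real" where
  "beta_min p \<beta> = Min ((\<lambda>i. \<bar>\<beta> i\<bar>) ` support p \<beta>)"

definition XT_mul :: "nat \<Rightarrow> (nat \<Rightarrow> nat \<Rightarrow> real) \<Rightarrow> (nat \<Rightarrow> real) \<Rightarrow> nat \<Rightarrow> real" where
  "XT_mul n X v j = (\<Sum>r\<in>{1..n}. X r j * v r)"

definition X_mul :: "nat \<Rightarrow> (nat \<Rightarrow> nat \<Rightarrow> real) \<Rightarrow> (nat \<Rightarrow> real) \<Rightarrow> nat \<Rightarrow> real" where
  "X_mul p X v r = (\<Sum>j\<in>{1..p}. X r j * v j)"

definition screening_cond ::
  "nat \<Rightarrow> nat \<Rightarrow> nat \<Rightarrow> (nat \<Rightarrow> nat \<Rightarrow> real) \<Rightarrow> (nat \<Rightarrow> real) \<Rightarrow> real \<Rightarrow> bool" where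
  "screening_cond n p k X \<beta> b \<longleftrightarrow>
     0 < b \<and> b < 1 / sqrt (real k) \<and>
     (\<forall>i\<in>support p \<beta>.
        \<bar>\<Sum>j\<in>support p \<beta> - {i}. col_inner n X i j * \<beta> j\<bar> \<le> b * vnorm p \<beta>) \<and>
     (\<forall>i\<in>{1..p} - support p \<beta>.
        \<bar>\<Sum>j\<in>support p \<beta>. col_inner n X i j * \<beta> j\<bar> \<le> b * vnorm p \<beta>)"

text \<open>Algorithm 1: S_hat is a possible output of marginal correlation screening
  with input X, y, d (any tie-breaking).\<close>
definition screening_output ::
  "nat \<Rightarrow> nat \<Rightarrow> (nat \<Rightarrow> nat \<Rightarrow> real) \<Rightarrow> (nat \<Rightarrow> real) \<Rightarrow> nat \<Rightarrow> nat set \<Rightarrow> bool" where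
  "screening_output n p X y d S_hat \<longleftrightarrow>
     (let w = XT_mul n X y in
       S_hat \<subseteq> {1..p} \<and> card S_hat = d \<and>
       (\<forall>i\<in>S_hat. \<forall>j\<in>{1..p} - S_hat. \<bar>w j\<bar> \<le> \<bar>w i\<bar>))"

end

theory Submission
  imports Defs
begin

text \<open>Writing \<open>w = X\<^sup>T y = X\<^sup>T X \<beta> + X\<^sup>T \<eta>\<close>, the unit-norm columns make
  \<open>w\<^sub>i = \<beta>\<^sub>i + (cross terms) + (noise)\<close> on the support. The screening condition
  bounds the cross terms by \<open>b \<parallel>\<beta>\<parallel>\<close> and the event \<open>\<G>\<^sub>\<eta>\<close> bounds the noise by
  \<open>2\<surd>(\<sigma>\<^sup>2 log p)\<close>, so the gap hypothesis makes every \<open>|w\<^sub>i|\<close>, \<open>i \<in> S\<close>, strictly larger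
  than every \<open>|w\<^sub>j|\<close>, \<open>j \<notin> S\<close>. Since \<open>\<surd>k \<beta>\<^sub>m\<^sub>i\<^sub>n \<le> \<parallel>\<beta>\<parallel>\<close>, the lower bound on \<open>d\<close>
  forces \<open>d \<ge> k\<close>, and a set of the \<open>d\<close> largest values must then contain \<open>S\<close>.\<close>

lemma top_values_superset:
  fixes f :: "'a \<Rightarrow> real"
  assumes "finite A" "T \<subseteq> A" "S \<subseteq> A" "card S \<le> card T"
    and top_T: "\<forall>i\<in>T. \<forall>j\<in>A - T. f j \<le> f i"
    and top_S: "\<forall>i\<in>S. \<forall>j\<in>A - S. f j < f i"
  shows "S \<subseteq> T"
proof
  fix i assume "i \<in> S"
  show "i \<in> T"
  proof (rule ccontr)
    assume "i \<notin> T"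
    have "T \<subseteq> S - {i}"
    proof
      fix j assume "j \<in> T"
      moreover have "i \<in> A - T" using \<open>i \<in> S\<close> \<open>i \<notin> T\<close> \<open>S \<subseteq> A\<close> by blast
      ultimately have "f i \<le> f j" using top_T by blast
      have "j \<in> S"
      proof (rule ccontr)
        assume "j \<notin> S"
        then have "j \<in> A - S" using \<open>j \<in> T\<close> \<open>T \<subseteq> A\<close> by blast
        then have "f j < f i" using top_S \<open>i \<in> S\<close> by blast
        then show False using \<open>f i \<le> f j\<close> by simp
      qed
      then show "j \<in> S - {i}" using \<open>j \<in> T\<close> \<open>i \<notin> T\<close> by auto
    qed
    moreover have "finite S" using \<open>finite A\<close> \<open>S \<subseteq> A\<close> finite_subset by blast
    ultimately have "card T \<le> card (S - {i})" by (intro card_mono) auto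
    also have "\<dots> = card S - 1" using \<open>i \<in> S\<close> \<open>finite S\<close> by simp
    finally have "card T \<le> card S - 1" .
    moreover have "0 < card S" using \<open>i \<in> S\<close> \<open>finite S\<close> card_gt_0_iff by blast
    ultimately show False using \<open>card S \<le> card T\<close> by linarith
  qed
qed

lemma real_le_ceiling_sqrt_div:
  fixes x g :: real
  assumes "0 \<le> x" "0 < g" "g * sqrt x \<le> 1"
  shows "x \<le> of_int \<lceil>sqrt x / g\<rceil>"
proof -
  have "g * x = g * sqrt x * sqrt x" using assms(1) by (simp add: mult.assoc)
  also have "\<dots> \<le> sqrt x" using assms by (simp add: mult_left_le_one_le)
  finally have "x \<le> sqrt x / g" using assms(2) by (simp add: pos_le_divide_eq mult.commute)
  then show ?thesis by linarith
qed

lemma support_subset: "support p \<beta> \<subseteq> {1..p}"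
  unfolding support_def by auto

lemma finite_support [simp]: "finite (support p \<beta>)"
  using finite_subset[OF support_subset] by blast

lemma sum_restrict_support:
  "(\<Sum>i\<in>{1..p}. f i * \<beta> i) = (\<Sum>i\<in>support p \<beta>. f i * \<beta> i)"
  by (rule sum.mono_neutral_right) (auto simp: support_def)

lemma beta_min_le: "i \<in> support p \<beta> \<Longrightarrow> beta_min p \<beta> \<le> \<bar>\<beta> i\<bar>"
  unfolding beta_min_def by simp

lemma beta_min_pos: "support p \<beta> \<noteq> {} \<Longrightarrow> 0 < beta_min p \<beta>"
  unfolding beta_min_def by (auto simp: support_def)

lemma sqrt_card_support_mul_beta_min_le_vnorm:
  "sqrt (real (card (support p \<beta>))) * beta_min p \<beta> \<le> vnorm p \<beta>"
proof (cases "support p \<beta> = {}")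
  case True
  then show ?thesis by (simp add: vnorm_def sum_nonneg)
next
  case False
  let ?S = "support p \<beta>" and ?m = "beta_min p \<beta>"
  have "real (card ?S) * ?m\<^sup>2 = (\<Sum>i\<in>?S. ?m\<^sup>2)" by simp
  also have "\<dots> \<le> (\<Sum>i\<in>?S. (\<beta> i)\<^sup>2)"
  proof (rule sum_mono)
    fix i assume "i \<in> ?S"
    have "?m\<^sup>2 \<le> \<bar>\<beta> i\<bar>\<^sup>2"
      using beta_min_le[OF \<open>i \<in> ?S\<close>] beta_min_pos[OF False] by (intro power_mono) auto
    then show "?m\<^sup>2 \<le> (\<beta> i)\<^sup>2" by simp
  qed
  also have "\<dots> = (\<Sum>i\<in>{1..p}. (\<beta> i)\<^sup>2)"
    using sum_restrict_support[where f="\<lambda>i. \<beta> i"] by (simp add: power2_eq_square)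
  finally have "sqrt (real (card ?S) * ?m\<^sup>2) \<le> vnorm p \<beta>"
    unfolding vnorm_def by (rule real_sqrt_le_mono)
  then show ?thesis using beta_min_pos[OF False] by (simp add: real_sqrt_mult)
qed

lemma vnorm_pos:
  assumes "support p \<beta> \<noteq> {}"
  shows "0 < vnorm p \<beta>"
proof -
  have "0 < sqrt (real (card (support p \<beta>))) * beta_min p \<beta>"
    using assms beta_min_pos[OF assms] by (simp add: card_gt_0_iff)
  then show ?thesis using sqrt_card_support_mul_beta_min_le_vnorm[of p \<beta>] by linarith
qed

lemma card_support_le_ceiling:
  assumes "support p \<beta> \<noteq> {}" "0 < g" "g \<le> beta_min p \<beta> / vnorm p \<beta>"
  shows "real (card (support p \<beta>)) \<le> of_int \<lceil>sqrt (real (card (support p \<beta>))) / g\<rceil>"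
proof (rule real_le_ceiling_sqrt_div)
  let ?r = "sqrt (real (card (support p \<beta>)))"
  have "g * ?r \<le> beta_min p \<beta> / vnorm p \<beta> * ?r"
    using assms(3) by (rule mult_right_mono) simp
  also have "\<dots> \<le> 1"
    using sqrt_card_support_mul_beta_min_le_vnorm[of p \<beta>] vnorm_pos[OF assms(1)]
    by (simp add: mult.commute)
  finally show "g * ?r \<le> 1" .
qed (use assms in auto)

lemma col_inner_self_eq_1:
  assumes "vnorm n (\<lambda>r. X r j) = 1"
  shows "col_inner n X j j = 1"
  using assms unfolding vnorm_def col_inner_def by (simp add: power2_eq_square)

lemma XT_mul_response:
  assumes "\<forall>r\<in>{1..n}. y r = X_mul p X \<beta> r + \<eta> r"
  shows "XT_mul n X y j = (\<Sum>i\<in>support p \<beta>. col_inner n X j i * \<beta> i) + XT_mul n X \<eta> j"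
proof -
  have "XT_mul n X y j = (\<Sum>r\<in>{1..n}. X r j * X_mul p X \<beta> r) + XT_mul n X \<eta> j"
    unfolding XT_mul_def using assms by (simp add: distrib_left sum.distrib)
  also have "(\<Sum>r\<in>{1..n}. X r j * X_mul p X \<beta> r) = (\<Sum>i\<in>{1..p}. col_inner n X j i * \<beta> i)"
    unfolding X_mul_def col_inner_def
    by (simp add: sum_distrib_left sum_distrib_right mult.assoc) (rule sum.swap)
  also have "\<dots> = (\<Sum>i\<in>support p \<beta>. col_inner n X j i * \<beta> i)"
    by (rule sum_restrict_support)
  finally show ?thesis .
qed

lemma screening_cond_separates:
  assumes unit_cols: "\<forall>j\<in>{1..p}. vnorm n (\<lambda>r. X r j) = 1"
    and y_def: "\<forall>r\<in>{1..n}. y r = X_mul p X \<beta> r + \<eta> r"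
    and screen: "screening_cond n p k X \<beta> b"
    and noise: "\<forall>j\<in>{1..p}. \<bar>XT_mul n X \<eta> j\<bar> \<le> t"
    and gap: "2 * b * vnorm p \<beta> + 2 * t < beta_min p \<beta>"
    and i: "i \<in> support p \<beta>" and j: "j \<in> {1..p} - support p \<beta>"
  shows "\<bar>XT_mul n X y j\<bar> < \<bar>XT_mul n X y i\<bar>"
proof -
  let ?S = "support p \<beta>" and ?N = "vnorm p \<beta>"
  let ?cross = "\<Sum>l\<in>?S - {i}. col_inner n X i l * \<beta> l"
  have i_range: "i \<in> {1..p}" using i support_subset by blast
  have "col_inner n X i i = 1" using unit_cols i_range by (simp add: col_inner_self_eq_1)
  then have "(\<Sum>l\<in>?S. col_inner n X i l * \<beta> l) = \<beta> i + ?cross"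
    using i by (simp add: sum.remove)
  then have "XT_mul n X y i = \<beta> i + ?cross + XT_mul n X \<eta> i"
    using XT_mul_response[OF y_def] by simp
  moreover have "\<bar>?cross\<bar> \<le> b * ?N" using screen i unfolding screening_cond_def by blast
  moreover have "\<bar>XT_mul n X \<eta> i\<bar> \<le> t" using noise i_range by blast
  ultimately have lower: "beta_min p \<beta> - b * ?N - t \<le> \<bar>XT_mul n X y i\<bar>"
    using beta_min_le[OF i] by linarith
  have "\<bar>\<Sum>l\<in>?S. col_inner n X j l * \<beta> l\<bar> \<le> b * ?N"
    using screen j unfolding screening_cond_def by blast
  moreover have "\<bar>XT_mul n X \<eta> j\<bar> \<le> t" using noise j by blast
  ultimately have upper: "\<bar>XT_mul n X y j\<bar> \<le> b * ?N + t"
    using XT_mul_response[OF y_def, of j] by linarith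
  show ?thesis using lower upper gap by linarith
qed

theorem theorem1:
  fixes n p k d :: nat and X :: "nat \<Rightarrow> nat \<Rightarrow> real"
    and \<beta> \<eta> y :: "nat \<Rightarrow> real" and \<sigma> b :: real and S_hat :: "nat set"
  assumes "0 < n" "2 \<le> p" "0 < k" "k < n"
    and unit_cols: "\<forall>j\<in>{1..p}. vnorm n (\<lambda>r. X r j) = 1"
    and sparse: "card (support p \<beta>) = k"
    and sigma: "0 < \<sigma>"
    and y_def: "\<forall>r\<in>{1..n}. y r = X_mul p X \<beta> r + \<eta> r"
    and screen: "screening_cond n p k X \<beta> b"
    and gap: "beta_min p \<beta> / vnorm p \<beta>
               > 2 * b + 4 * sqrt (\<sigma>\<^sup>2 * ln (real p)) / vnorm p \<beta>"
    and event: "\<forall>j\<in>{1..p}. \<bar>XT_mul n X \<eta> j\<bar> \<le> 2 * sqrt (\<sigma>\<^sup>2 * ln (real p))"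
    and d_le: "d \<le> p"
    and d_ge: "of_int \<lceil>sqrt (real k) /
                 (beta_min p \<beta> / vnorm p \<beta> - 2 * b
                   - 4 * sqrt (\<sigma>\<^sup>2 * ln (real p)) / vnorm p \<beta>)\<rceil> \<le> real d"
    and out: "screening_output n p X y d S_hat"
  shows "support p \<beta> \<subseteq> S_hat"
proof -
  define N where "N = vnorm p \<beta>"
  define s where "s = sqrt (\<sigma>\<^sup>2 * ln (real p))"
  define g where "g = beta_min p \<beta> / N - 2 * b - 4 * s / N"
  have "support p \<beta> \<noteq> {}" using sparse \<open>0 < k\<close> by auto
  then have "0 < N" using vnorm_pos N_def by blast
  have "0 < b" "0 \<le> s" using screen \<open>2 \<le> p\<close> by (auto simp: screening_cond_def s_def)
  have "0 < g" using gap by (simp add: g_def N_def s_def)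
  moreover have "g \<le> beta_min p \<beta> / N"
    using \<open>0 < b\<close> divide_nonneg_pos[of "4 * s" N] \<open>0 \<le> s\<close> \<open>0 < N\<close> unfolding g_def by linarith
  ultimately have "k \<le> d"
    using card_support_le_ceiling[OF \<open>support p \<beta> \<noteq> {}\<close>] d_ge sparse
    by (fastforce simp: g_def N_def s_def)
  have "(2 * b + 4 * s / N) * N < beta_min p \<beta>"
    using gap \<open>0 < N\<close> by (simp add: N_def s_def pos_less_divide_eq)
  then have "2 * b * N + 2 * (2 * s) < beta_min p \<beta>" using \<open>0 < N\<close> by (simp add: algebra_simps)
  then have "\<forall>i\<in>support p \<beta>. \<forall>j\<in>{1..p} - support p \<beta>. \<bar>XT_mul n X y j\<bar> < \<bar>XT_mul n X y i\<bar>"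
    using screening_cond_separates[OF unit_cols y_def screen] event by (simp add: N_def s_def)
  moreover have "S_hat \<subseteq> {1..p}" "card S_hat = d"
    "\<forall>i\<in>S_hat. \<forall>j\<in>{1..p} - S_hat. \<bar>XT_mul n X y j\<bar> \<le> \<bar>XT_mul n X y i\<bar>"
    using out by (simp_all add: screening_output_def Let_def)
  ultimately show ?thesis
    using top_values_superset[where f = "\<lambda>j. \<bar>XT_mul n X y j\<bar>"] support_subset sparse \<open>k \<le> d\<close>
    by (metis finite_atLeastAtMost)
qed

end
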